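(* Let $\iota:\mathcal{S}_\bullet\to\mathcal{T}_\bullet$ be the linear map sending $\sigma\in S_n$ to the set composition $(\{\sigma(1)\},\ldots,\{\sigma(n)\})\in\mathsf{Comp}_n$. Then $\iota$ is an injective morphism of Hopf algebras $(\mathcal{S}_\bullet,\times,\hat{\delta})\to(\mathcal{T}_\bullet,\overline{\ast},\hat{\delta})$ (an embedding of enveloping algebras), and it is also an injective morphism of Hopf algebras from the Malvenuto–Reutenauer Hopf algebra $(\mathcal{S}_\bullet,\ast,\overline{\delta})$ into $(\mathcal{T}_\bullet,\hat{\ast},\overline{\delta})$.
   Context: $[n]=\{1,\ldots,n\}$; $\mathcal{S}_\bullet=\bigoplus_{n\ge0}\mathbb{Z}[S_n]$, a permutation $\sigma\in S_n$ being identified with the word $(\sigma(1),\ldots,\sigma(n))$. For a word $w$ in distinct positive integers and a set $A$, $w|_A$ is the subsequence of letters in $A$, and $\mathsf{is}_A$ standardizes (replaces letters by their ranks). On $\mathcal{S}_\bullet$: $(\alpha\times\beta)(i)=\alpha(i)$ for $i\le n$ and $n+\beta(i-n)$ for $i>n$ ($\alpha\in S_n$, $\beta\in S_m$); $\hat{\delta}(\alpha)=\sum_{S\sqcup T=[n]}\mathsf{is}_S(\alpha|_S)\otimes\mathsf{is}_T(\alpha|_T)$; $\alpha\ast\beta=q_{(n,m)}\cdot(\alpha\times\beta)$ (product in $\mathbb{Z}[S_{n+m}]$), where $q_{(n,m)}$ is the sum of all $\pi\in S_{n+m}$ with $\pi(1)<\cdots<\pi(n)$ and $\pi(n+1)<\cdots<\pi(n+m)$;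 $\overline{\delta}(\alpha)=\sum_{i=0}^n\alpha|_{[i]}\otimes\mathsf{is}_{\{i+1,\ldots,n\}}(\alpha|_{\{i+1,\ldots,n\}})$. Set compositions: a set composition of a finite $S\subset\mathbb{N}$ is a tuple of pairwise disjoint non-empty subsets with union $S$; $\mathsf{Comp}_n$ is the set of those of $[n]$; $\mathcal{T}_\bullet=\bigoplus_n\mathbb{Z}[\mathsf{Comp}_n]$. $\mathsf{is}_{S,T}$ relabels blockwise by the order-preserving bijection $S\to T$, $\mathsf{is}_S=\mathsf{is}_{S,[|S|]}$; $P|_A=\mathsf{is}_A((P_1\cap A,\ldots,P_k\cap A)^\#)$, $^\#$ deleting empty entries; $\ast$ is concatenation of tuples on disjoint ground sets. For $P=(P_1,\ldots,P_k)\in\mathsf{Comp}_p$, $Q=(Q_1,\ldots,Q_l)\in\mathsf{Comp}_q$: $P\,\overline{\ast}\,Q=(P_1,\ldots,P_k,p+Q_1,\ldots,p+Q_l)$ with $p+X=\{p+x\}$; $P\,\hat{\ast}\,Q=\sum_{A\sqcup B=[p+q],|A|=p}\mathsf{is}_{[p],A}(P)\ast\mathsf{is}_{[q],B}(Q)$. For $P\in\mathsf{Comp}_n$: $\hat{\delta}(P)=\sum_{A\sqcup B=[n]}P|_A\otimes P|_B$, $\overline{\delta}(P)=\sum_{p+q=n}P|_{[p]}\otimes P|_{\{p+1,\ldots,n\}}$. *)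

theory Defs
  imports "HOL-Library.Poly_Mapping"
begin

text \<open>Free abelian groups are modelled as \<open>'a \<Rightarrow>\<^sub>0 int\<close> (finitely supported
integer-valued functions), with basis elements \<open>frag_of x\<close> and linear extension
\<open>frag_extend\<close>.  The tensor product of \<open>\<int>[X]\<close> and \<open>\<int>[Y]\<close> is \<open>\<int>[X \<times> Y]\<close>.\<close>

definition lin_ext :: "('b \<Rightarrow> 'a) \<Rightarrow> ('b \<Rightarrow>\<^sub>0 int) \<Rightarrow> 'a \<Rightarrow>\<^sub>0 int" where
  "lin_ext f = frag_extend (\<lambda>x. frag_of (f x))"

definition bilin_ext :: "('a \<Rightarrow> 'b \<Rightarrow> 'c \<Rightarrow>\<^sub>0 int) \<Rightarrow> ('a \<Rightarrow>\<^sub>0 int) \<Rightarrow> ('b \<Rightarrow>\<^sub>0 int) \<Rightarrow> 'c \<Rightarrow>\<^sub>0 int" where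
  "bilin_ext m a b = frag_extend (\<lambda>x. frag_extend (\<lambda>y. m x y) b) a"

definition tensor_map :: "('a \<Rightarrow> 'c) \<Rightarrow> ('b \<Rightarrow> 'd) \<Rightarrow> ('a \<times> 'b \<Rightarrow>\<^sub>0 int) \<Rightarrow> ('c \<times> 'd \<Rightarrow>\<^sub>0 int)" where
  "tensor_map f g = frag_extend (\<lambda>(x, y). frag_of (f x, g y))"

text \<open>Order-preserving bijection from a finite set \<open>S\<close> onto a finite set \<open>T\<close>
(of the same cardinality): the \<open>k\<close>-th smallest element of \<open>S\<close> goes to the
\<open>k\<close>-th smallest element of \<open>T\<close>.\<close>
definition relabel :: "nat set \<Rightarrow> nat set \<Rightarrow> nat \<Rightarrow> nat" where
  "relabel S T x = sorted_list_of_set T ! card {y \<in> S. y < x}"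

definition std :: "nat set \<Rightarrow> nat \<Rightarrow> nat" where
  "std S = relabel S {1..card S}"

definition Perm :: "nat \<Rightarrow> nat list set" where
  "Perm n = {w. distinct w \<and> set w = {1..n}}"

definition Perms :: "nat list set" where
  "Perms = (\<Union>n. Perm n)"

definition wrestr_std :: "nat list \<Rightarrow> nat set \<Rightarrow> nat list" where
  "wrestr_std w S = map (std S) (filter (\<lambda>x. x \<in> S) w)"

definition wrestr :: "nat list \<Rightarrow> nat set \<Rightarrow> nat list" where
  "wrestr w S = filter (\<lambda>x. x \<in> S) w"

definition perm_cross :: "nat list \<Rightarrow> nat list \<Rightarrow> nat list" where
  "perm_cross a b = a @ map (\<lambda>i. length a + i) b"

text \<open>Product in the group algebra: \<open>(\<pi>\<sigma>)(i) = \<pi>(\<sigma>(i))\<close>.\<close>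
definition perm_comp :: "nat list \<Rightarrow> nat list \<Rightarrow> nat list" where
  "perm_comp p s = map (\<lambda>i. p ! (i - 1)) s"

definition shuffles_q :: "nat \<Rightarrow> nat \<Rightarrow> nat list set" where
  "shuffles_q n m = {p \<in> Perm (n + m). sorted_wrt (<) (take n p) \<and> sorted_wrt (<) (drop n p)}"

definition perm_ast :: "nat list \<Rightarrow> nat list \<Rightarrow> nat list \<Rightarrow>\<^sub>0 int" where
  "perm_ast a b = (\<Sum>p\<in>shuffles_q (length a) (length b). frag_of (perm_comp p (perm_cross a b)))"

definition perm_delta_hat :: "nat list \<Rightarrow> (nat list \<times> nat list) \<Rightarrow>\<^sub>0 int" where
  "perm_delta_hat a = (\<Sum>S\<in>Pow {1..length a}.
      frag_of (wrestr_std a S, wrestr_std a ({1..length a} - S)))"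

definition perm_delta_bar :: "nat list \<Rightarrow> (nat list \<times> nat list) \<Rightarrow>\<^sub>0 int" where
  "perm_delta_bar a = (\<Sum>i\<in>{0..length a}.
      frag_of (wrestr a {1..i}, wrestr_std a {i+1..length a}))"

definition Comp :: "nat \<Rightarrow> nat set list set" where
  "Comp n = {P. (\<forall>B\<in>set P. B \<noteq> {}) \<and>
                (\<forall>i j. i < length P \<longrightarrow> j < length P \<longrightarrow> i \<noteq> j \<longrightarrow> P ! i \<inter> P ! j = {}) \<and>
                \<Union>(set P) = {1..n}}"

definition Comps :: "nat set list set" where
  "Comps = (\<Union>n. Comp n)"

definition comp_size :: "nat set list \<Rightarrow> nat" where
  "comp_size P = card (\<Union>(set P))"

definition relabel_comp :: "nat set \<Rightarrow> nat set \<Rightarrow> nat set list \<Rightarrow> nat set list" where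
  "relabel_comp S T P = map (\<lambda>B. relabel S T ` B) P"

definition comp_restr :: "nat set list \<Rightarrow> nat set \<Rightarrow> nat set list" where
  "comp_restr P A = relabel_comp A {1..card A} (filter (\<lambda>B. B \<noteq> {}) (map (\<lambda>B. B \<inter> A) P))"

definition comp_ast_bar :: "nat set list \<Rightarrow> nat set list \<Rightarrow> nat set list" where
  "comp_ast_bar P Q = P @ map (\<lambda>B. (\<lambda>x. comp_size P + x) ` B) Q"

definition comp_ast_hat :: "nat set list \<Rightarrow> nat set list \<Rightarrow> nat set list \<Rightarrow>\<^sub>0 int" where
  "comp_ast_hat P Q = (\<Sum>A\<in>{A. A \<subseteq> {1..comp_size P + comp_size Q} \<and> card A = comp_size P}.
      frag_of (relabel_comp {1..comp_size P} A P @
               relabel_comp {1..comp_size Q} ({1..comp_size P + comp_size Q} - A) Q))"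

definition comp_delta_hat :: "nat set list \<Rightarrow> (nat set list \<times> nat set list) \<Rightarrow>\<^sub>0 int" where
  "comp_delta_hat P = (\<Sum>A\<in>Pow {1..comp_size P}.
      frag_of (comp_restr P A, comp_restr P ({1..comp_size P} - A)))"

definition comp_delta_bar :: "nat set list \<Rightarrow> (nat set list \<times> nat set list) \<Rightarrow>\<^sub>0 int" where
  "comp_delta_bar P = (\<Sum>p\<in>{0..comp_size P}.
      frag_of (comp_restr P {1..p}, comp_restr P {p+1..comp_size P}))"

definition iota_basis :: "nat list \<Rightarrow> nat set list" where
  "iota_basis w = map (\<lambda>x. {x}) w"

definition iota :: "(nat list \<Rightarrow>\<^sub>0 int) \<Rightarrow> (nat set list \<Rightarrow>\<^sub>0 int)" where
  "iota = lin_ext iota_basis"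

definition counit :: "('a list \<Rightarrow>\<^sub>0 int) \<Rightarrow> int" where
  "counit x = Poly_Mapping.lookup x []"

text \<open>A linear map \<open>f\<close> (given on the subgroup supported on \<open>B1\<close>) is a bialgebra morphism
from \<open>(\<int>[B1], m1, \<Delta>1, unit [], counit)\<close> to \<open>(\<int>[B2], m2, \<Delta>2, unit [], counit)\<close>,
where the products/coproducts are bilinear/linear extensions of their values on basis elements.\<close>
definition bialg_morphism ::
  "'a list set \<Rightarrow> ('a list \<Rightarrow> 'a list \<Rightarrow> 'a list \<Rightarrow>\<^sub>0 int) \<Rightarrow> ('a list \<Rightarrow> ('a list \<times> 'a list) \<Rightarrow>\<^sub>0 int)
   \<Rightarrow> ('b list \<Rightarrow> 'b list \<Rightarrow> 'b list \<Rightarrow>\<^sub>0 int) \<Rightarrow> ('b list \<Rightarrow> ('b list \<times> 'b list) \<Rightarrow>\<^sub>0 int)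
   \<Rightarrow> ('a list \<Rightarrow> 'b list) \<Rightarrow> bool" where
  "bialg_morphism B1 m1 d1 m2 d2 f \<longleftrightarrow>
     lin_ext f (frag_of []) = frag_of [] \<and>
     (\<forall>a b. Poly_Mapping.keys a \<subseteq> B1 \<longrightarrow> Poly_Mapping.keys b \<subseteq> B1 \<longrightarrow>
        lin_ext f (bilin_ext m1 a b) = bilin_ext m2 (lin_ext f a) (lin_ext f b)) \<and>
     (\<forall>a. Poly_Mapping.keys a \<subseteq> B1 \<longrightarrow> counit (lin_ext f a) = counit a) \<and>
     (\<forall>a. Poly_Mapping.keys a \<subseteq> B1 \<longrightarrow>
        tensor_map f f (frag_extend d1 a) = frag_extend d2 (lin_ext f a))"

end

theory Submission
  imports Defs
begin

text \<open>The map \<open>\<iota>\<close> splits a permutation word into singletons, so it commutes with restriction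
and standardization; this gives both coproducts termwise, and it turns the shifted
concatenation of words into the shifted concatenation of compositions.  For the shuffle
product, a permutation \<open>q \<in> S\<^sub>n\<^sub>+\<^sub>m\<close> increasing on its first \<open>n\<close> and its last \<open>m\<close> positions
is determined by the \<open>n\<close>-set \<open>A = {q(1), \<dots>, q(n)}\<close>, and \<open>q \<cdot> (\<alpha> \<times> \<beta>)\<close> relabels the
letters of \<open>\<alpha>\<close> monotonically onto \<open>A\<close> and those of \<open>\<beta>\<close> onto its complement.  Hence
\<open>\<iota>(\<alpha> \<ast> \<beta>)\<close> is the sum over \<open>A\<close> defining the shuffle product of \<open>\<iota>(\<alpha>)\<close> and \<open>\<iota>(\<beta>)\<close>.\<close>

lemma frag_extend_frag_extend:
  "frag_extend h (frag_extend g a) = frag_extend (\<lambda>x. frag_extend h (g x)) a"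
  using subset_UNIV
  by (induction a rule: frag_induction) (auto simp: frag_extend_diff)

lemma lin_ext_of: "lin_ext f (frag_of x) = frag_of (f x)"
  by (simp add: lin_ext_def)

lemma lookup_lin_ext_inj:
  assumes "inj f"
  shows "Poly_Mapping.lookup (lin_ext f a) (f x) = Poly_Mapping.lookup a x"
  using subset_UNIV[of "Poly_Mapping.keys a"]
proof (induction a rule: frag_induction)
  case zero then show ?case by (simp add: lin_ext_def)
next
  case (one y) then show ?case using assms by (auto simp: lin_ext_def inj_eq)
next
  case (diff a b) then show ?case by (simp add: lin_ext_def frag_extend_diff lookup_minus)
qed

lemma inj_lin_ext:
  assumes "inj f" shows "inj (lin_ext f)"
proof (rule injI)
  fix a b assume "lin_ext f a = lin_ext f b"
  then have "Poly_Mapping.lookup a x = Poly_Mapping.lookup b x" for x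
    using lookup_lin_ext_inj[OF assms, of a x] lookup_lin_ext_inj[OF assms, of b x] by simp
  then show "a = b" by (rule poly_mapping_eqI)
qed

lemma bialg_morphismI:
  assumes unit: "f [] = []"
    and Nil_iff: "\<And>x. x \<in> B1 \<Longrightarrow> f x = [] \<longleftrightarrow> x = []"
    and mult: "\<And>x y. x \<in> B1 \<Longrightarrow> y \<in> B1 \<Longrightarrow> lin_ext f (m1 x y) = m2 (f x) (f y)"
    and comult: "\<And>x. x \<in> B1 \<Longrightarrow> tensor_map f f (d1 x) = d2 (f x)"
  shows "bialg_morphism B1 m1 d1 m2 d2 f"
  unfolding bialg_morphism_def
proof (intro conjI allI impI)
  show "lin_ext f (frag_of []) = frag_of []" by (simp add: lin_ext_of unit)
next
  fix a b :: "_ \<Rightarrow>\<^sub>0 int"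
  assume a: "Poly_Mapping.keys a \<subseteq> B1" and b: "Poly_Mapping.keys b \<subseteq> B1"
  have "lin_ext f (bilin_ext m1 a b) = frag_extend (\<lambda>x. frag_extend (\<lambda>y. lin_ext f (m1 x y)) b) a"
    by (simp add: lin_ext_def bilin_ext_def frag_extend_frag_extend)
  also have "\<dots> = frag_extend (\<lambda>x. frag_extend (\<lambda>y. m2 (f x) (f y)) b) a"
    using a b by (intro frag_extend_eq) (simp add: mult subset_iff)
  also have "\<dots> = bilin_ext m2 (lin_ext f a) (lin_ext f b)"
    by (simp add: lin_ext_def bilin_ext_def frag_extend_frag_extend)
  finally show "lin_ext f (bilin_ext m1 a b) = bilin_ext m2 (lin_ext f a) (lin_ext f b)" .
next
  fix a :: "_ \<Rightarrow>\<^sub>0 int"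
  assume "Poly_Mapping.keys a \<subseteq> B1"
  then show "counit (lin_ext f a) = counit a"
  proof (induction a rule: frag_induction)
    case zero then show ?case by (simp add: lin_ext_def counit_def)
  next
    case (one x) then show ?case using Nil_iff[of x] by (auto simp: lin_ext_def counit_def)
  next
    case (diff a b) then show ?case
      by (simp add: lin_ext_def counit_def frag_extend_diff lookup_minus)
  qed
next
  fix a :: "_ \<Rightarrow>\<^sub>0 int"
  assume a: "Poly_Mapping.keys a \<subseteq> B1"
  have "tensor_map f f (frag_extend d1 a) = frag_extend (\<lambda>x. tensor_map f f (d1 x)) a"
    by (simp add: tensor_map_def frag_extend_frag_extend)
  also have "\<dots> = frag_extend (\<lambda>x. d2 (f x)) a"
    using a by (intro frag_extend_eq) (simp add: comult subset_iff)
  also have "\<dots> = frag_extend d2 (lin_ext f a)"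
    by (simp add: lin_ext_def frag_extend_frag_extend)
  finally show "tensor_map f f (frag_extend d1 a) = frag_extend d2 (lin_ext f a)" .
qed

lemma sorted_list_of_set_strict_sorted:
  "sorted_wrt (<) xs \<Longrightarrow> sorted_list_of_set (set xs) = xs"
  by (simp add: sorted_list_of_set.idem_if_sorted_distinct strict_sorted_iff)

lemma PermsD: "x \<in> Perms \<Longrightarrow> distinct x \<and> set x = {1..length x}"
  unfolding Perms_def Perm_def by (auto dest: distinct_card)

lemma relabel_atLeastAtMost:
  assumes "i \<in> {1..n}"
  shows "relabel {1..n} T i = sorted_list_of_set T ! (i - 1)"
proof -
  have "{y \<in> {1..n}. y < i} = {1..<i}" using assms by auto
  then show ?thesis by (simp add: relabel_def)
qed

lemma std_atLeastAtMost:
  assumes "i \<in> {1..n}"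
  shows "std {1..n} i = i"
proof -
  have "std {1..n} i = sorted_list_of_set {1..n} ! (i - 1)"
    unfolding std_def relabel_atLeastAtMost[OF assms] by simp
  also have "\<dots> = [1..<Suc n] ! (i - 1)"
    by (simp add: atLeastLessThanSuc_atLeastAtMost[symmetric])
  also have "\<dots> = i"
    using assms by (subst nth_upt) auto
  finally show ?thesis .
qed

lemma wrestr_std_atLeastAtMost: "wrestr_std w {1..p} = wrestr w {1..p}"
  unfolding wrestr_std_def wrestr_def
  by (induction w) (auto simp: std_atLeastAtMost std_atLeastAtMost[simplified])

lemma comp_size_iota_basis: "distinct w \<Longrightarrow> comp_size (iota_basis w) = length w"
  by (simp add: comp_size_def iota_basis_def distinct_card)

lemma comp_restr_iota_basis: "comp_restr (iota_basis w) A = iota_basis (wrestr_std w A)"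
  by (induction w) (auto simp: comp_restr_def iota_basis_def wrestr_std_def relabel_comp_def std_def)

lemma iota_basis_perm_cross:
  assumes "distinct x"
  shows "iota_basis (perm_cross x y) = comp_ast_bar (iota_basis x) (iota_basis y)"
  unfolding comp_ast_bar_def comp_size_iota_basis[OF assms]
  by (simp add: iota_basis_def perm_cross_def)

lemma tensor_map_iota_perm_delta_hat:
  "distinct x \<Longrightarrow>
    tensor_map iota_basis iota_basis (perm_delta_hat x) = comp_delta_hat (iota_basis x)"
  by (simp add: perm_delta_hat_def comp_delta_hat_def comp_size_iota_basis tensor_map_def
      frag_extend_sum comp_restr_iota_basis o_def)

lemma tensor_map_iota_perm_delta_bar:
  "distinct x \<Longrightarrow>
    tensor_map iota_basis iota_basis (perm_delta_bar x) = comp_delta_bar (iota_basis x)"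
  by (simp add: perm_delta_bar_def comp_delta_bar_def comp_size_iota_basis tensor_map_def
      frag_extend_sum comp_restr_iota_basis o_def wrestr_std_atLeastAtMost
      wrestr_std_atLeastAtMost[simplified])

lemma shuffles_qD:
  assumes "p \<in> shuffles_q n m"
  shows "distinct p" "set p = {1..n+m}" "length p = n + m"
    "sorted_wrt (<) (take n p)" "sorted_wrt (<) (drop n p)"
proof -
  show d: "distinct p" and s: "set p = {1..n+m}" using assms by (auto simp: shuffles_q_def Perm_def)
  show "length p = n + m" using distinct_card[OF d] s by simp
  show "sorted_wrt (<) (take n p)" "sorted_wrt (<) (drop n p)" using assms by (auto simp: shuffles_q_def)
qed

lemma shuffles_q_diff_set_take:
  assumes "p \<in> shuffles_q n m"
  shows "{1..n+m} - set (take n p) = set (drop n p)"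
proof -
  have "distinct (take n p @ drop n p)" "set (take n p @ drop n p) = {1..n+m}"
    using shuffles_qD(1,2)[OF assms] by simp_all
  then show ?thesis by (auto simp del: append_take_drop_id)
qed

definition shuffle_of_subset :: "nat \<Rightarrow> nat set \<Rightarrow> nat list" where
  "shuffle_of_subset N A = sorted_list_of_set A @ sorted_list_of_set ({1..N} - A)"

lemma bij_betw_shuffles_q_subsets:
  "bij_betw (\<lambda>p. set (take n p)) (shuffles_q n m) {A. A \<subseteq> {1..n+m} \<and> card A = n}"
proof (rule bij_betw_byWitness[where f' = "shuffle_of_subset (n + m)"])
  show "\<forall>p \<in> shuffles_q n m. shuffle_of_subset (n + m) (set (take n p)) = p"
  proof
    fix p assume p: "p \<in> shuffles_q n m"
    show "shuffle_of_subset (n + m) (set (take n p)) = p"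
      unfolding shuffle_of_subset_def shuffles_q_diff_set_take[OF p]
      using shuffles_qD(4,5)[OF p] by (simp add: sorted_list_of_set_strict_sorted)
  qed
  show "(\<lambda>p. set (take n p)) ` shuffles_q n m \<subseteq> {A. A \<subseteq> {1..n+m} \<and> card A = n}"
    using shuffles_qD set_take_subset by (fastforce simp: distinct_card)
  have "set (take n (shuffle_of_subset (n + m) A)) = A \<and>
      shuffle_of_subset (n + m) A \<in> shuffles_q n m"
    if A: "A \<subseteq> {1..n+m}" "card A = n" for A
  proof -
    have "finite A" using A(1) finite_subset by blast
    moreover have "take n (shuffle_of_subset (n + m) A) = sorted_list_of_set A"
      "drop n (shuffle_of_subset (n + m) A) = sorted_list_of_set ({1..n+m} - A)"
      using A(2) by (simp_all add: shuffle_of_subset_def)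
    ultimately show ?thesis
      using A(1) by (auto simp: shuffles_q_def Perm_def shuffle_of_subset_def)
  qed
  then show "\<forall>A \<in> {A. A \<subseteq> {1..n+m} \<and> card A = n}. set (take n (shuffle_of_subset (n + m) A)) = A"
    "shuffle_of_subset (n + m) ` {A. A \<subseteq> {1..n+m} \<and> card A = n} \<subseteq> shuffles_q n m"
    by auto
qed

lemma finite_shuffles_q: "finite (shuffles_q n m)"
  by (rule bij_betw_finite[OF bij_betw_shuffles_q_subsets, THEN iffD2])
    (rule finite_subset[of _ "Pow {1..n+m}"]; auto)

lemma iota_basis_perm_comp_shuffle:
  assumes p: "p \<in> shuffles_q n m" and x: "set x = {1..n}" "length x = n" and y: "set y = {1..m}"
  shows "iota_basis (perm_comp p (perm_cross x y)) =
     relabel_comp {1..n} (set (take n p)) (iota_basis x) @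
     relabel_comp {1..m} ({1..n+m} - set (take n p)) (iota_basis y)"
proof -
  have "p ! (i - 1) = relabel {1..n} (set (take n p)) i" if "i \<in> set x" for i
  proof -
    have i: "i \<in> {1..n}" using that x by blast
    have "relabel {1..n} (set (take n p)) i = take n p ! (i - 1)"
      unfolding relabel_atLeastAtMost[OF i]
      using shuffles_qD(4)[OF p] by (simp add: sorted_list_of_set_strict_sorted)
    then show ?thesis using i by auto
  qed
  moreover have "p ! (n + i - 1) = relabel {1..m} ({1..n+m} - set (take n p)) i"
    if "i \<in> set y" for i
  proof -
    have i: "i \<in> {1..m}" using that y by blast
    have "relabel {1..m} ({1..n+m} - set (take n p)) i = drop n p ! (i - 1)"
      unfolding relabel_atLeastAtMost[OF i] shuffles_q_diff_set_take[OF p]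
      using shuffles_qD(5)[OF p] by (simp add: sorted_list_of_set_strict_sorted)
    then show ?thesis using i shuffles_qD(3)[OF p] by simp
  qed
  ultimately show ?thesis
    using x(2) by (simp add: iota_basis_def perm_comp_def perm_cross_def relabel_comp_def)
qed

lemma lin_ext_iota_perm_ast:
  assumes x: "x \<in> Perms" and y: "y \<in> Perms"
  shows "lin_ext iota_basis (perm_ast x y) = comp_ast_hat (iota_basis x) (iota_basis y)"
proof -
  let ?n = "length x" and ?m = "length y"
  have "lin_ext iota_basis (perm_ast x y) =
      (\<Sum>p\<in>shuffles_q ?n ?m. frag_of (iota_basis (perm_comp p (perm_cross x y))))"
    by (simp add: perm_ast_def lin_ext_def frag_extend_sum[OF finite_shuffles_q] o_def)
  also have "\<dots> = (\<Sum>p\<in>shuffles_q ?n ?m.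
      frag_of (relabel_comp {1..?n} (set (take ?n p)) (iota_basis x) @
               relabel_comp {1..?m} ({1..?n + ?m} - set (take ?n p)) (iota_basis y)))"
    using PermsD[OF x] PermsD[OF y] by (simp add: iota_basis_perm_comp_shuffle)
  also have "\<dots> = (\<Sum>A\<in>{A. A \<subseteq> {1..?n + ?m} \<and> card A = ?n}.
      frag_of (relabel_comp {1..?n} A (iota_basis x) @
               relabel_comp {1..?m} ({1..?n + ?m} - A) (iota_basis y)))"
    by (rule sum.reindex_bij_betw[OF bij_betw_shuffles_q_subsets])
  also have "\<dots> = comp_ast_hat (iota_basis x) (iota_basis y)"
    using PermsD[OF x] PermsD[OF y] by (simp add: comp_ast_hat_def comp_size_iota_basis)
  finally show ?thesis .
qed

theorem theorem4p4:
  shows "inj_on iota {a. Poly_Mapping.keys a \<subseteq> Perms}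
    \<and> bialg_morphism Perms (\<lambda>a b. frag_of (perm_cross a b)) perm_delta_hat
                          (\<lambda>P Q. frag_of (comp_ast_bar P Q)) comp_delta_hat iota_basis
    \<and> bialg_morphism Perms perm_ast perm_delta_bar
                          comp_ast_hat comp_delta_bar iota_basis"
proof (intro conjI)
  have iota_basis_eq_Nil: "iota_basis x = [] \<longleftrightarrow> x = []" for x
    by (simp add: iota_basis_def)
  have "inj iota_basis" unfolding iota_basis_def by (rule inj_mapI) (simp add: inj_def)
  then have "inj iota" unfolding iota_def by (rule inj_lin_ext)
  then show "inj_on iota {a. Poly_Mapping.keys a \<subseteq> Perms}" by (rule inj_on_subset) simp
  show "bialg_morphism Perms (\<lambda>a b. frag_of (perm_cross a b)) perm_delta_hat
                          (\<lambda>P Q. frag_of (comp_ast_bar P Q)) comp_delta_hat iota_basis"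
    by (rule bialg_morphismI)
      (auto simp: iota_basis_eq_Nil lin_ext_of iota_basis_perm_cross
        tensor_map_iota_perm_delta_hat dest: PermsD)
  show "bialg_morphism Perms perm_ast perm_delta_bar comp_ast_hat comp_delta_bar iota_basis"
    by (rule bialg_morphismI)
      (auto simp: iota_basis_eq_Nil lin_ext_iota_perm_ast tensor_map_iota_perm_delta_bar
        dest: PermsD)
qed

end
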